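(* Let $M$ be a finite set of alternatives, $\mathcal{R}$ the set of weak preference orders on $M$, and $\varphi:\mathcal{R}\to\Delta(M)$ a mechanism. If $\varphi$ is multi-separation strategyproof, then it is strategyproof.
   Context: A preference order is a complete, transitive relation $R$ on $M$; $a\,I\,b$ means $a\,R\,b$ and $b\,R\,a$; $a\,P\,b$ means $a\,R\,b$ and not $b\,R\,a$. Write $R$ as $M_1\,P\,\cdots\,P\,M_K$ where $(M_k)$ are the nonempty indifference classes ordered so that $a\,P\,b$ for $a\in M_k$, $b\in M_{k'}$, $k<k'$. A lottery $x\in\Delta(M)$ first order-stochastically dominates $y$ at $R$ if $\sum_{j: j R a}x_j\ge\sum_{j: j R a}y_j$ for all $a\in M$. $\varphi$ is strategyproof if $\varphi(R)$ first order-stochastically dominates $\varphi(R')$ at $R$ for all $R,R'\in\mathcal{R}$. A multi-separation is a pair $(R,R')$ such that, with $R=M_1\,P\,\cdots\,P\,M_K$, there are integers $L_1,\dots,L_K\ge1$ and, for each $k$, a partition of $M_k$ into pairwise disjoint nonempty sets $M_k^1,\dots,M_k^{L_k}$ with $R'=M_1^1\,P'\,\cdots\,P'\,M_1^{L_1}\,P'\,M_2^1\,P'\,\cdots\,P'\,M_K^1\,P'\,\cdots\,P'\,M_K^{L_K}$ (indifference within each listed set). $\varphi$ is multi-separation strategyproof if for every multi-separation $(R,R')$, $\varphi(R)$ first order-stochastically dominates $\varphi(R')$ at $R$ and $\varphi(R')$ first order-stochastically dominates $\varphi(R)$ at $R'$. *)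

theory Defs
  imports Complex_Main
begin

definition preference :: "'a set \<Rightarrow> 'a rel \<Rightarrow> bool" where
  "preference M R \<longleftrightarrow> R \<subseteq> M \<times> M \<and>
     (\<forall>a\<in>M. \<forall>b\<in>M. (a, b) \<in> R \<or> (b, a) \<in> R) \<and> trans R"

definition prefs :: "'a set \<Rightarrow> 'a rel set" where
  "prefs M = {R. preference M R}"

definition lotteries :: "'a set \<Rightarrow> ('a \<Rightarrow> real) set" where
  "lotteries M = {x. (\<forall>a\<in>M. x a \<ge> 0) \<and> (\<forall>a. a \<notin> M \<longrightarrow> x a = 0) \<and> sum x M = 1}"

definition sd_dom :: "'a set \<Rightarrow> 'a rel \<Rightarrow> ('a \<Rightarrow> real) \<Rightarrow> ('a \<Rightarrow> real) \<Rightarrow> bool" where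
  "sd_dom M R x y \<longleftrightarrow>
     (\<forall>a\<in>M. sum x {j\<in>M. (j, a) \<in> R} \<ge> sum y {j\<in>M. (j, a) \<in> R})"

definition strategyproof :: "'a set \<Rightarrow> ('a rel \<Rightarrow> ('a \<Rightarrow> real)) \<Rightarrow> bool" where
  "strategyproof M \<phi> \<longleftrightarrow>
     (\<forall>R\<in>prefs M. \<forall>R'\<in>prefs M. sd_dom M R (\<phi> R) (\<phi> R'))"

definition ordered_partition :: "'a set \<Rightarrow> 'a set list \<Rightarrow> bool" where
  "ordered_partition S Ms \<longleftrightarrow>
     (\<forall>k<length Ms. Ms ! k \<noteq> {}) \<and>
     (\<forall>k<length Ms. \<forall>l<length Ms. k \<noteq> l \<longrightarrow> Ms ! k \<inter> Ms ! l = {}) \<and>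
     \<Union>(set Ms) = S"

definition pref_of_list :: "'a set list \<Rightarrow> 'a rel" where
  "pref_of_list Ms = {(a, b). \<exists>k<length Ms. \<exists>l<length Ms. k \<le> l \<and> a \<in> Ms ! k \<and> b \<in> Ms ! l}"

definition multi_separation :: "'a set \<Rightarrow> 'a rel \<Rightarrow> 'a rel \<Rightarrow> bool" where
  "multi_separation M R R' \<longleftrightarrow>
     (\<exists>Ms Ls. ordered_partition M Ms \<and> R = pref_of_list Ms \<and>
        length Ls = length Ms \<and>
        (\<forall>k<length Ms. ordered_partition (Ms ! k) (Ls ! k) \<and> Ls ! k \<noteq> []) \<and>
        R' = pref_of_list (concat Ls))"

definition multi_separation_strategyproof :: "'a set \<Rightarrow> ('a rel \<Rightarrow> ('a \<Rightarrow> real)) \<Rightarrow> bool" where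
  "multi_separation_strategyproof M \<phi> \<longleftrightarrow>
     (\<forall>R R'. multi_separation M R R' \<longrightarrow>
        sd_dom M R (\<phi> R) (\<phi> R') \<and> sd_dom M R' (\<phi> R') (\<phi> R))"

end

theory Submission
  imports Defs
begin

(*
  Fix R, R', an alternative a and its upper contour set U at R, and let T be the two-class
  order U P (M - U). When a multi-separation splits every class of a coarse order so that U
  meets each class in an initial segment of its pieces, the coarse lottery gives U at most the
  mass of the fine one: the two lotteries agree on unions of whole coarse classes, and the fine
  one dominates on each initial segment. Splitting the classes of R' along U, and then moving
  the classes inside U upwards one adjacent swap at a time (a merge followed by a split, the
  merge being the mirror image of the above for M - U), shows phi(R')(U) <= phi(T)(U).
  Finally phi(T)(U) <= phi(R)(U) because R is a multi-separation of T with U an upper contour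
  set.
*)

lemma sorted_wrt_disjnt_iff_nth:
  "sorted_wrt disjnt Ms \<longleftrightarrow> (\<forall>k<length Ms. \<forall>l<length Ms. k \<noteq> l \<longrightarrow> Ms ! k \<inter> Ms ! l = {})"
  unfolding sorted_wrt_iff_nth_less disjnt_def
proof (intro iffI allI impI)
  fix k l assume H: "\<forall>i j. i < j \<longrightarrow> j < length Ms \<longrightarrow> Ms ! i \<inter> Ms ! j = {}"
    and "k < length Ms" "l < length Ms" "k \<noteq> l"
  then consider "k < l" | "l < k" by linarith
  then show "Ms ! k \<inter> Ms ! l = {}"
    using H[rule_format, of k l] H[rule_format, of l k] \<open>k < length Ms\<close> \<open>l < length Ms\<close>
    by cases (simp_all add: Int_commute)
qed auto

lemma ordered_partition_iff:
  "ordered_partition S Ms \<longleftrightarrow> (\<forall>D\<in>set Ms. D \<noteq> {}) \<and> sorted_wrt disjnt Ms \<and> \<Union>(set Ms) = S"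
  unfolding ordered_partition_def sorted_wrt_disjnt_iff_nth all_set_conv_all_nth ..

definition ordered_cover :: "'a set \<Rightarrow> 'a set list \<Rightarrow> bool" where
  "ordered_cover S Ms \<longleftrightarrow> sorted_wrt disjnt Ms \<and> \<Union>(set Ms) = S"

lemma pref_of_list_Nil [simp]: "pref_of_list [] = {}"
  by (simp add: pref_of_list_def)

lemma pref_of_list_Cons:
  "pref_of_list (D # Ds) = D \<times> (D \<union> \<Union>(set Ds)) \<union> pref_of_list Ds"
  unfolding pref_of_list_def length_Cons Ex_less_Suc2
  by (auto simp: in_set_conv_nth) (use nth_mem in blast)

lemma pref_of_list_append:
  "pref_of_list (xs @ ys) = pref_of_list xs \<union> pref_of_list ys \<union> \<Union>(set xs) \<times> \<Union>(set ys)"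
  by (induction xs) (auto simp: pref_of_list_Cons)

lemma pref_of_list_subset: "pref_of_list Ms \<subseteq> \<Union>(set Ms) \<times> \<Union>(set Ms)"
  by (induction Ms) (auto simp: pref_of_list_Cons)

lemma pref_of_list_filter_nonempty: "pref_of_list (filter (\<lambda>D. D \<noteq> {}) Ms) = pref_of_list Ms"
  by (induction Ms) (auto simp: pref_of_list_Cons)

lemma upper_contour_pref_of_list:
  assumes "ordered_cover M (P @ D # Q)" "a \<in> D"
  shows "{j \<in> M. (j, a) \<in> pref_of_list (P @ D # Q)} = \<Union>(set P) \<union> D"
  using assms pref_of_list_subset[of P] pref_of_list_subset[of Q]
  by (auto simp: ordered_cover_def pref_of_list_append pref_of_list_Cons sorted_wrt_append disjnt_iff)

lemma sum_Union_sorted_wrt_disjnt: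
  assumes "sorted_wrt disjnt As" "\<forall>A\<in>set As. finite A"
  shows "sum f (\<Union>(set As)) = (\<Sum>A\<leftarrow>As. sum f A)"
  using assms
proof (induction As)
  case (Cons A As)
  then have "sum f (A \<union> \<Union>(set As)) = sum f A + sum f (\<Union>(set As))"
    by (intro sum.union_disjoint) (auto simp: disjnt_def)
  with Cons show ?case by simp
qed simp

lemma preference_has_top:
  assumes "finite A" "A \<noteq> {}" "A \<subseteq> M" "preference M R"
  shows "\<exists>a\<in>A. \<forall>b\<in>A. (a, b) \<in> R"
  using assms
proof (induction A rule: finite_ne_induct)
  case (singleton x)
  then show ?case unfolding preference_def by auto
next
  case (insert x F)
  then obtain a where a: "a \<in> F" "\<forall>b\<in>F. (a, b) \<in> R" by auto
  have complete: "(u, v) \<in> R \<or> (v, u) \<in> R" if "u \<in> insert x F" "v \<in> insert x F" for u v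
    using insert.prems that unfolding preference_def by blast
  have "trans R" using insert.prems unfolding preference_def by blast
  show ?case
  proof (cases "(a, x) \<in> R")
    case True
    with a show ?thesis by blast
  next
    case False
    then have "(x, a) \<in> R" using complete a(1) by blast
    then have "\<forall>b\<in>F. (x, b) \<in> R" using a(2) \<open>trans R\<close> by (blast dest: transD)
    moreover have "(x, x) \<in> R" using complete by blast
    ultimately show ?thesis by blast
  qed
qed

lemma preference_eq_pref_of_list:
  assumes "finite M" "preference M R"
  shows "\<exists>Ms. ordered_cover M Ms \<and> R = pref_of_list Ms"
  using assms
proof (induction M arbitrary: R rule: finite_psubset_induct)
  case (psubset M)
  show ?case
  proof (cases "M = {}")
    case True
    then have "R = {}" using psubset.prems unfolding preference_def by auto
    with True show ?thesis by (intro exI[of _ "[]"]) (simp add: ordered_cover_def)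
  next
    case False
    define T where "T = {a \<in> M. \<forall>b\<in>M. (a, b) \<in> R}"
    have RM: "R \<subseteq> M \<times> M" and tr: "trans R"
      using psubset.prems unfolding preference_def by auto
    have "T \<noteq> {}"
      using preference_has_top[OF psubset.hyps(1) False subset_refl psubset.prems]
      unfolding T_def by auto
    then have sub: "M - T \<subset> M" unfolding T_def by auto
    have "preference (M - T) (R \<inter> (M - T) \<times> (M - T))"
      using psubset.prems unfolding preference_def trans_def by blast
    then obtain Ns where Ns: "ordered_cover (M - T) Ns" "R \<inter> (M - T) \<times> (M - T) = pref_of_list Ns"
      using psubset.IH[OF sub] by blast
    have lower: "y \<notin> T" if "(x, y) \<in> R" "x \<notin> T" for x y
      using that RM tr unfolding T_def trans_def by blast
    have "T \<subseteq> M" "T \<times> M \<subseteq> R" unfolding T_def by auto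
    then have "R = T \<times> M \<union> R \<inter> (M - T) \<times> (M - T)"
      using RM lower by blast
    also have "\<dots> = pref_of_list (T # Ns)"
      using Ns \<open>T \<subseteq> M\<close> unfolding pref_of_list_Cons ordered_cover_def by auto
    finally have "R = pref_of_list (T # Ns)" .
    moreover have "ordered_cover M (T # Ns)"
      using Ns \<open>T \<subseteq> M\<close> unfolding ordered_cover_def by (auto simp: disjnt_def)
    ultimately show ?thesis by blast
  qed
qed

lemma sd_dom_pref_of_list_prefix:
  assumes "ordered_cover M (P @ Q)" "sd_dom M (pref_of_list (P @ Q)) x y"
  shows "sum y (\<Union>(set P)) \<le> sum x (\<Union>(set P))"
  using assms
proof (induction P arbitrary: Q rule: rev_induct)
  case Nil
  then show ?case by simp
next
  case (snoc D P)
  show ?case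
  proof (cases "D = {}")
    case True
    then show ?thesis using snoc.IH[of "D # Q"] snoc.prems by simp
  next
    case False
    then obtain a where "a \<in> D" by blast
    have "a \<in> M"
      using \<open>a \<in> D\<close> snoc.prems(1) unfolding ordered_cover_def by auto
    then have "sum y {j \<in> M. (j, a) \<in> pref_of_list (P @ D # Q)}
        \<le> sum x {j \<in> M. (j, a) \<in> pref_of_list (P @ D # Q)}"
      using snoc.prems(2) unfolding sd_dom_def by simp
    then show ?thesis
      using snoc.prems(1) upper_contour_pref_of_list[of M P D Q a] \<open>a \<in> D\<close>
      by (simp add: Un_commute)
  qed
qed

abbreviation coarsening :: "'a set list list \<Rightarrow> 'a set list" where
  "coarsening Ls \<equiv> map (\<lambda>L. \<Union>(set L)) Ls"

lemma sorted_wrt_disjnt_coarsening: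
  "sorted_wrt disjnt (concat Ls) \<Longrightarrow> sorted_wrt disjnt (coarsening Ls)"
  by (induction Ls) (auto simp: sorted_wrt_append)

lemma ordered_cover_coarsening:
  "ordered_cover M (concat Ls) \<Longrightarrow> ordered_cover M (coarsening Ls)"
  unfolding ordered_cover_def using sorted_wrt_disjnt_coarsening by auto

lemma multi_separation_coarsening:
  assumes "ordered_cover M (concat Ls)"
  shows "multi_separation M (pref_of_list (coarsening Ls)) (pref_of_list (concat Ls))"
proof -
  \<comment> \<open>\<open>multi_separation\<close> demands nonempty classes and blocks, so empty ones are dropped.\<close>
  define Ls' where "Ls' = filter (\<lambda>L. L \<noteq> []) (map (filter (\<lambda>E. E \<noteq> {})) Ls)"
  have coarse: "coarsening Ls' = filter (\<lambda>D. D \<noteq> {}) (coarsening Ls)"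
    unfolding Ls'_def by (induction Ls) (auto simp: filter_empty_conv)
  have fine: "concat Ls' = filter (\<lambda>E. E \<noteq> {}) (concat Ls)"
    unfolding Ls'_def by (induction Ls) auto
  have coarse_partition: "ordered_partition M (coarsening Ls')"
    using ordered_cover_coarsening[OF assms]
    unfolding ordered_partition_iff ordered_cover_def coarse by (auto intro: sorted_wrt_filter)
  have "sorted_wrt disjnt (concat Ls)" using assms unfolding ordered_cover_def ..
  then have "sorted_wrt disjnt L" if "L \<in> set Ls" for L
    using that by (induction Ls) (auto simp: sorted_wrt_append)
  then have block_partition: "ordered_partition (\<Union>(set L)) L \<and> L \<noteq> []" if "L \<in> set Ls'" for L
    using that unfolding ordered_partition_iff Ls'_def by (auto intro: sorted_wrt_filter)
  show ?thesis
    unfolding multi_separation_def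
  proof (intro exI[of _ "coarsening Ls'"] exI[of _ Ls'] conjI allI impI)
    show "pref_of_list (coarsening Ls) = pref_of_list (coarsening Ls')"
      unfolding coarse pref_of_list_filter_nonempty ..
    show "pref_of_list (concat Ls) = pref_of_list (concat Ls')"
      unfolding fine pref_of_list_filter_nonempty ..
    fix k assume "k < length (coarsening Ls')"
    then show "ordered_partition (coarsening Ls' ! k) (Ls' ! k)" "Ls' ! k \<noteq> []"
      using block_partition[of "Ls' ! k"] by auto
  qed (use coarse_partition in simp_all)
qed

definition prefix_cut :: "'a set \<Rightarrow> 'a set list \<Rightarrow> bool" where
  "prefix_cut U L \<longleftrightarrow> (\<exists>E1 E2. L = E1 @ E2 \<and> U \<inter> \<Union>(set L) = \<Union>(set E1))"

definition pure_wrt :: "'a set \<Rightarrow> 'a set list \<Rightarrow> bool" where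
  "pure_wrt U Ms \<longleftrightarrow> (\<forall>X\<in>set Ms. X \<subseteq> U \<or> X \<inter> U = {})"

definition pair_blocks :: "'a set list \<Rightarrow> 'a set \<Rightarrow> 'a set \<Rightarrow> 'a set list \<Rightarrow> 'a set list list" where
  "pair_blocks P D E Q = map (\<lambda>X. [X]) P @ [D, E] # map (\<lambda>X. [X]) Q"

lemma concat_pair_blocks [simp]: "concat (pair_blocks P D E Q) = P @ D # E # Q"
  by (simp add: pair_blocks_def)

lemma coarsening_pair_blocks [simp]: "coarsening (pair_blocks P D E Q) = P @ (D \<union> E) # Q"
  by (simp add: pair_blocks_def comp_def)

lemma prefix_cut_pair_blocks:
  assumes "pure_wrt V (P @ D # E # Q)" "D \<subseteq> V \<or> E \<inter> V = {}"
  shows "\<forall>L\<in>set (pair_blocks P D E Q). prefix_cut V L"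
proof -
  have "prefix_cut V [X]" if "X \<subseteq> V \<or> X \<inter> V = {}" for X
  proof (cases "X \<subseteq> V")
    case True
    then show ?thesis unfolding prefix_cut_def by (intro exI[of _ "[X]"] exI[of _ "[]"]) auto
  next
    case False
    then show ?thesis
      using that unfolding prefix_cut_def by (intro exI[of _ "[]"] exI[of _ "[X]"]) auto
  qed
  moreover have "prefix_cut V [D, E]"
  proof -
    have "D \<subseteq> V \<or> D \<inter> V = {}" "E \<subseteq> V \<or> E \<inter> V = {}"
      using assms(1) unfolding pure_wrt_def by auto
    then consider "D \<subseteq> V" "E \<subseteq> V" | "D \<subseteq> V" "E \<inter> V = {}" | "D \<inter> V = {}" "E \<inter> V = {}"
      using assms(2) by blast
    then show ?thesis
      unfolding prefix_cut_def
      by cases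
        ((intro exI[of _ "[D, E]"] exI[of _ "[]"]; auto),
         (intro exI[of _ "[D]"] exI[of _ "[E]"]; auto),
         (intro exI[of _ "[]"] exI[of _ "[D, E]"]; auto))
  qed
  ultimately show ?thesis
    using assms(1) unfolding pair_blocks_def pure_wrt_def by auto
qed

locale ms_strategyproof =
  fixes M :: "'a set" and \<phi> :: "'a rel \<Rightarrow> 'a \<Rightarrow> real"
  assumes finite_M: "finite M" and ms_sp: "multi_separation_strategyproof M \<phi>"
begin

abbreviation mass :: "'a set list \<Rightarrow> 'a set \<Rightarrow> real" where
  "mass Ms U \<equiv> sum (\<phi> (pref_of_list Ms)) U"

lemma sd_dom_refinement:
  assumes "ordered_cover M (concat Ls)"
  shows "sd_dom M (pref_of_list (coarsening Ls))
           (\<phi> (pref_of_list (coarsening Ls))) (\<phi> (pref_of_list (concat Ls)))"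
    and "sd_dom M (pref_of_list (concat Ls))
           (\<phi> (pref_of_list (concat Ls))) (\<phi> (pref_of_list (coarsening Ls)))"
  using ms_sp multi_separation_coarsening[OF assms]
  unfolding multi_separation_strategyproof_def by blast+

lemma refinement_agrees_on_block_prefix:
  assumes "ordered_cover M (concat (P @ Q))"
  shows "mass (coarsening (P @ Q)) (\<Union>(set (concat P))) = mass (concat (P @ Q)) (\<Union>(set (concat P)))"
proof -
  have "mass (coarsening (P @ Q)) (\<Union>(set (concat P))) \<le> mass (concat (P @ Q)) (\<Union>(set (concat P)))"
    using sd_dom_pref_of_list_prefix[of M "concat P" "concat Q"] assms sd_dom_refinement(2)[OF assms]
    by simp
  moreover have "mass (concat (P @ Q)) (\<Union>(set (coarsening P))) \<le> mass (coarsening (P @ Q)) (\<Union>(set (coarsening P)))"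
    using sd_dom_pref_of_list_prefix[of M "coarsening P" "coarsening Q"]
      ordered_cover_coarsening[OF assms] sd_dom_refinement(1)[OF assms]
    by simp
  moreover have "\<Union>(set (coarsening P)) = \<Union>(set (concat P))" by auto
  ultimately show ?thesis by simp
qed

lemma refinement_dominates_on_cut_block:
  assumes "ordered_cover M (concat Ls)" "L \<in> set Ls" "prefix_cut U L"
  shows "mass (coarsening Ls) (U \<inter> \<Union>(set L)) \<le> mass (concat Ls) (U \<inter> \<Union>(set L))"
proof -
  obtain P Q where Ls: "Ls = P @ L # Q" using split_list[OF assms(2)] by blast
  obtain E1 E2 where L: "L = E1 @ E2" and cut: "U \<inter> \<Union>(set L) = \<Union>(set E1)"
    using assms(3) unfolding prefix_cut_def by blast
  define B where "B = \<Union>(set (concat P))"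
  have "mass (coarsening Ls) (B \<union> \<Union>(set E1)) \<le> mass (concat Ls) (B \<union> \<Union>(set E1))"
    using sd_dom_pref_of_list_prefix[of M "concat P @ E1" "E2 @ concat Q"]
      assms(1) sd_dom_refinement(2)[OF assms(1)]
    unfolding Ls L B_def by simp
  moreover have "mass (coarsening Ls) B = mass (concat Ls) B"
    using refinement_agrees_on_block_prefix[of P "L # Q"] assms(1) unfolding Ls B_def by simp
  moreover have "sum g (B \<union> \<Union>(set E1)) = sum g B + sum g (\<Union>(set E1))" for g :: "'a \<Rightarrow> real"
  proof (rule sum.union_disjoint)
    show "finite B" "finite (\<Union>(set E1))"
      using assms(1) finite_M unfolding ordered_cover_def Ls L B_def by (auto intro: finite_subset)
    show "B \<inter> \<Union>(set E1) = {}"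
      using assms(1) unfolding ordered_cover_def Ls L B_def by (auto simp: sorted_wrt_append disjnt_iff)
  qed
  ultimately show ?thesis unfolding cut by simp
qed

lemma refinement_mono:
  assumes "ordered_cover M (concat Ls)" "\<forall>L\<in>set Ls. prefix_cut U L" "U \<subseteq> M"
  shows "mass (coarsening Ls) U \<le> mass (concat Ls) U"
proof -
  let ?parts = "map (\<lambda>L. U \<inter> \<Union>(set L)) Ls"
  have "sorted_wrt (\<lambda>L L'. disjnt (\<Union>(set L)) (\<Union>(set L'))) Ls"
    using ordered_cover_coarsening[OF assms(1)] unfolding ordered_cover_def sorted_wrt_map ..
  then have parts_disjoint: "sorted_wrt disjnt ?parts"
    unfolding sorted_wrt_map by (rule sorted_wrt_mono_rel[rotated]) (auto simp: disjnt_iff)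
  have parts_finite: "\<forall>A\<in>set ?parts. finite A"
    using assms(3) finite_M by (auto intro: finite_subset)
  have "\<Union>(set ?parts) = U \<inter> \<Union>(set (concat Ls))" by auto
  also have "\<dots> = U" using assms(1,3) unfolding ordered_cover_def by blast
  finally have split: "sum g U = (\<Sum>L\<leftarrow>Ls. sum g (U \<inter> \<Union>(set L)))" for g :: "'a \<Rightarrow> real"
    using sum_Union_sorted_wrt_disjnt[OF parts_disjoint parts_finite, of g] by (simp add: comp_def)
  show ?thesis
    unfolding split
    by (rule sum_list_mono) (use assms(1,2) refinement_dominates_on_cut_block in blast)
qed

lemma refinement_antimono:
  assumes "ordered_cover M (concat Ls)" "\<forall>L\<in>set Ls. prefix_cut (M - U) L" "U \<subseteq> M"
  shows "mass (concat Ls) U \<le> mass (coarsening Ls) U"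
proof -
  have "mass (coarsening Ls) (M - U) \<le> mass (concat Ls) (M - U)"
    using refinement_mono[OF assms(1,2)] by blast
  moreover have "mass (coarsening Ls) M = mass (concat Ls) M"
    using refinement_agrees_on_block_prefix[of Ls "[]"] assms(1)
    unfolding ordered_cover_def by simp
  ultimately show ?thesis
    using sum_diff[OF finite_M assms(3), of "\<phi> (pref_of_list (coarsening Ls))"]
      sum_diff[OF finite_M assms(3), of "\<phi> (pref_of_list (concat Ls))"]
    by linarith
qed

lemma merge_adjacent:
  assumes "ordered_cover M (P @ D # E # Q)" "pure_wrt U (P @ D # E # Q)"
    and "D \<inter> U = {} \<or> E \<subseteq> U" "U \<subseteq> M"
  shows "mass (P @ D # E # Q) U \<le> mass (P @ (D \<union> E) # Q) U"
proof -
  have "D \<subseteq> M" "E \<subseteq> M"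
    using assms(1) unfolding ordered_cover_def by auto
  then have "D \<subseteq> M - U \<or> E \<inter> (M - U) = {}"
    using assms(3) by blast
  moreover have "pure_wrt (M - U) (P @ D # E # Q)"
    using assms(1,2) unfolding ordered_cover_def pure_wrt_def by blast
  ultimately have "\<forall>L\<in>set (pair_blocks P D E Q). prefix_cut (M - U) L"
    using prefix_cut_pair_blocks by blast
  then show ?thesis
    using refinement_antimono[of "pair_blocks P D E Q" U] assms(1,4) by simp
qed

lemma split_adjacent:
  assumes "ordered_cover M (P @ D # E # Q)" "pure_wrt U (P @ D # E # Q)"
    and "D \<subseteq> U \<or> E \<inter> U = {}" "U \<subseteq> M"
  shows "mass (P @ (D \<union> E) # Q) U \<le> mass (P @ D # E # Q) U"
  using refinement_mono[of "pair_blocks P D E Q" U] prefix_cut_pair_blocks[OF assms(2,3)] assms(1,4)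
  by simp

lemma swap_adjacent:
  assumes "ordered_cover M (P @ D # E # Q)" "pure_wrt U (P @ D # E # Q)"
    and "D \<inter> U = {}" "E \<subseteq> U" "U \<subseteq> M"
  shows "mass (P @ D # E # Q) U \<le> mass (P @ E # D # Q) U"
proof -
  have "set (P @ E # D # Q) = set (P @ D # E # Q)" by auto
  moreover have "sorted_wrt disjnt (P @ E # D # Q)"
    using assms(1) unfolding ordered_cover_def by (auto simp: sorted_wrt_append intro: disjnt_sym)
  ultimately have "ordered_cover M (P @ E # D # Q)" "pure_wrt U (P @ E # D # Q)"
    using assms(1,2) unfolding ordered_cover_def pure_wrt_def by simp_all
  then have "mass (P @ (E \<union> D) # Q) U \<le> mass (P @ E # D # Q) U"
    using split_adjacent assms(4,5) by blast
  moreover have "mass (P @ D # E # Q) U \<le> mass (P @ (D \<union> E) # Q) U"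
    using merge_adjacent assms by blast
  ultimately show ?thesis by (simp add: Un_commute)
qed

text \<open>An insertion sort: each class of \<open>S\<close> inside \<open>U\<close> is swapped above \<open>Vp\<close> and merged
  into \<open>Up\<close>, each class outside \<open>U\<close> is merged into \<open>Vp\<close>.\<close>
lemma pure_le_two_class:
  assumes "ordered_cover M (Up # Vp # S)" "pure_wrt U S" "Up \<subseteq> U" "Vp \<inter> U = {}" "U \<subseteq> M"
  shows "mass (Up # Vp # S) U \<le> mass [U, M - U] U"
  using assms(1-4)
proof (induction S arbitrary: Up Vp)
  case Nil
  then have "Up = U" "Vp = M - U"
    using assms(5) unfolding ordered_cover_def by auto
  then show ?case by simp
next
  case (Cons D S)
  have pure: "pure_wrt U (Up # Vp # D # S)" and "pure_wrt U S"
    using Cons.prems(2-4) unfolding pure_wrt_def by auto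
  have "disjnt Vp D"
    using Cons.prems(1) unfolding ordered_cover_def by simp
  show ?case
  proof (cases "D \<subseteq> U")
    case False
    then have "D \<inter> U = {}" using Cons.prems(2) unfolding pure_wrt_def by auto
    have "mass (Up # Vp # D # S) U \<le> mass (Up # (Vp \<union> D) # S) U"
      using merge_adjacent[of "[Up]"] Cons.prems(1,4) pure assms(5) by simp
    also have "\<dots> \<le> mass [U, M - U] U"
    proof (rule Cons.IH)
      show "ordered_cover M (Up # (Vp \<union> D) # S)"
        using Cons.prems(1) unfolding ordered_cover_def by auto
      show "(Vp \<union> D) \<inter> U = {}" using Cons.prems(4) \<open>D \<inter> U = {}\<close> by blast
    qed (fact \<open>pure_wrt U S\<close> Cons.prems(3))+
    finally show ?thesis .
  next
    case True
    have "mass (Up # Vp # D # S) U \<le> mass (Up # D # Vp # S) U"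
      using swap_adjacent[of "[Up]"] Cons.prems(1,4) pure True assms(5) by simp
    also have "\<dots> \<le> mass ((Up \<union> D) # Vp # S) U"
    proof (rule merge_adjacent[of "[]", simplified])
      show "ordered_cover M (Up # D # Vp # S)"
        using Cons.prems(1) \<open>disjnt Vp D\<close> unfolding ordered_cover_def
        by (auto intro: disjnt_sym)
      show "pure_wrt U (Up # D # Vp # S)" using pure unfolding pure_wrt_def by auto
    qed (use True assms(5) in blast)+
    also have "\<dots> \<le> mass [U, M - U] U"
    proof (rule Cons.IH)
      show "ordered_cover M ((Up \<union> D) # Vp # S)"
        using Cons.prems(1) \<open>disjnt Vp D\<close> unfolding ordered_cover_def
        by (auto intro: disjnt_sym)
      show "Up \<union> D \<subseteq> U" using Cons.prems(3) True by blast
    qed (fact \<open>pure_wrt U S\<close> Cons.prems(4))+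
    finally show ?thesis .
  qed
qed

lemma mass_le_two_class:
  assumes "ordered_cover M Ns" "U \<subseteq> M"
  shows "mass Ns U \<le> mass [U, M - U] U"
proof -
  define Ls where "Ls = map (\<lambda>N. [N \<inter> U, N - U]) Ns"
  have "coarsening Ls = Ns" unfolding Ls_def by (induction Ns) auto
  have "sorted_wrt disjnt Ns" "\<Union>(set Ns) = M"
    using assms(1) unfolding ordered_cover_def by auto
  then have cover: "ordered_cover M (concat Ls)"
    unfolding ordered_cover_def Ls_def
    by (induction Ns arbitrary: M) (auto simp: sorted_wrt_append disjnt_iff)
  have "prefix_cut U [N \<inter> U, N - U]" for N
    using prefix_cut_pair_blocks[of U "[]" "N \<inter> U" "N - U" "[]"]
    unfolding pure_wrt_def pair_blocks_def by auto
  then have "\<forall>L\<in>set Ls. prefix_cut U L" unfolding Ls_def by auto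
  then have "mass Ns U \<le> mass (concat Ls) U"
    using refinement_mono[OF cover] assms(2) \<open>coarsening Ls = Ns\<close> by simp
  also have "\<dots> = mass ({} # {} # concat Ls) U" by (simp add: pref_of_list_Cons)
  also have "\<dots> \<le> mass [U, M - U] U"
  proof (rule pure_le_two_class)
    show "ordered_cover M ({} # {} # concat Ls)" using cover unfolding ordered_cover_def by simp
    show "pure_wrt U (concat Ls)" unfolding pure_wrt_def Ls_def by auto
  qed (use assms(2) in auto)
  finally show ?thesis .
qed

lemma two_class_le_upper_contour:
  assumes "R \<in> prefs M" "a \<in> M"
  defines "U \<equiv> {j \<in> M. (j, a) \<in> R}"
  shows "mass [U, M - U] U \<le> sum (\<phi> R) U"
proof -
  obtain Ms where Ms: "ordered_cover M Ms" "R = pref_of_list Ms"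
    using preference_eq_pref_of_list finite_M assms(1) unfolding prefs_def by blast
  then obtain D where "D \<in> set Ms" "a \<in> D"
    using assms(2) unfolding ordered_cover_def by blast
  then obtain P Q where PQ: "Ms = P @ D # Q" by (meson split_list)
  have U: "U = \<Union>(set P) \<union> D"
    using upper_contour_pref_of_list Ms PQ \<open>a \<in> D\<close> unfolding U_def by simp
  have "concat [P @ [D], Q] = Ms" "coarsening [P @ [D], Q] = [U, M - U]"
    using Ms(1) unfolding PQ U ordered_cover_def by (auto simp: sorted_wrt_append disjnt_iff)
  then have "sd_dom M R (\<phi> R) (\<phi> (pref_of_list [U, M - U]))"
    using sd_dom_refinement(2)[of "[P @ [D], Q]"] Ms by simp
  then show ?thesis using assms(2) unfolding sd_dom_def U_def by blast
qed

end

theorem lemma8: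
  fixes M :: "'a set" and \<phi> :: "'a rel \<Rightarrow> ('a \<Rightarrow> real)"
  assumes "finite M"
    and "\<forall>R\<in>prefs M. \<phi> R \<in> lotteries M"
    and "multi_separation_strategyproof M \<phi>"
  shows "strategyproof M \<phi>"
proof -
  interpret ms_strategyproof M \<phi>
    using assms(1,3) by unfold_locales
  show ?thesis
    unfolding strategyproof_def sd_dom_def
  proof (intro ballI)
    fix R R' a assume "R \<in> prefs M" "R' \<in> prefs M" "a \<in> M"
    define U where "U = {j \<in> M. (j, a) \<in> R}"
    obtain Ns where "ordered_cover M Ns" "R' = pref_of_list Ns"
      using preference_eq_pref_of_list assms(1) \<open>R' \<in> prefs M\<close> unfolding prefs_def by blast
    then have "sum (\<phi> R') U \<le> mass [U, M - U] U"
      using mass_le_two_class unfolding U_def by auto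
    also have "\<dots> \<le> sum (\<phi> R) U"
      using two_class_le_upper_contour \<open>R \<in> prefs M\<close> \<open>a \<in> M\<close> unfolding U_def by blast
    finally show "sum (\<phi> R') U \<le> sum (\<phi> R) U" .
  qed
qed

end
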